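(* For every signed permutation $\pi\in\mathfrak{B}_n$, \[\sum_{k\ge0}\Omega'_B(\pi;k)\,t^k=\frac{(1+t)^n}{(1-t)^{n+1}}\left(\frac{2t}{1+t}\right)^{\varsigma(\pi)}\left(\frac{4t}{(1+t)^2}\right)^{\operatorname{pe}_B(\pi)}=\left(\frac12\right)^{\varsigma(\pi)}\frac{(1+t)^{n+\varsigma(\pi)}}{(1-t)^{n+1}}\left(\frac{4t}{(1+t)^2}\right)^{\operatorname{pe}_B(\pi)+\varsigma(\pi)}.\]
   Context: $\mathfrak{B}_n$ is the group of signed permutations (bijections $\pi$ of $\{-n,\dots,n\}$ with $\pi(-i)=-\pi(i)$), written as words $(\pi(1),\dots,\pi(n))$, with $\pi(0)=0$. A peak of $\pi$ is a position $i\in\{1,\dots,n-1\}$ with $\pi(i-1)<\pi(i)>\pi(i+1)$, and $\operatorname{pe}_B(\pi)$ is the number of peaks. $\varsigma(\pi)=0$ if $\pi(1)>0$ and $\varsigma(\pi)=1$ if $\pi(1)<0$. For an integer $k\ge0$ let $Z_k$ be the totally ordered set $0<\bar1<1<\bar2<2<\dots<\bar k<k$, with $0$ and unbarred $j$ "plus-type" and barred $\bar j$ "minus-type". $\Omega'_B(\pi;k)$ is the number of sequences $(a_1,\dots,a_n)\in Z_k^n$ such that, with $a_0=0$, $a_0\le a_1\le\dots\le a_n$ and for every $s\in\{0,\dots,n-1\}$: if $\pi(s)<\pi(s+1)$ then $a_s<a_{s+1}$ or ($a_s=a_{s+1}$ is plus-type); if $\pi(s)>\pi(s+1)$ then $a_s<a_{s+1}$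 or ($a_s=a_{s+1}$ is minus-type). *)

theory Defs
  imports "HOL-Computational_Algebra.Formal_Power_Series"
begin

text \<open>Signed permutations of {-n..n}, as functions on int, extended by the identity
  outside {-n..n} so that the set of them is finite.\<close>
definition signed_perms :: "nat \<Rightarrow> (int \<Rightarrow> int) set" where
  "signed_perms n = {\<pi>. bij_betw \<pi> {-int n..int n} {-int n..int n}
                        \<and> (\<forall>i. \<pi> (-i) = - \<pi> i)
                        \<and> (\<forall>i. i \<notin> {-int n..int n} \<longrightarrow> \<pi> i = i)}"

definition peB :: "nat \<Rightarrow> (int \<Rightarrow> int) \<Rightarrow> nat" where
  "peB n \<pi> = card {i \<in> {1..int n - 1}. \<pi> (i - 1) < \<pi> i \<and> \<pi> i > \<pi> (i + 1)}"

definition varsigma :: "(int \<Rightarrow> int) \<Rightarrow> nat" where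
  "varsigma \<pi> = (if \<pi> 1 > 0 then 0 else 1)"

text \<open>The totally ordered set Z_k = 0 < bar1 < 1 < bar2 < 2 < ... < bar k < k is encoded
  order-preservingly by natural numbers {0..2k}: 0 as 0, bar j as 2j-1, j as 2j.\<close>
definition Zset :: "nat \<Rightarrow> nat set" where
  "Zset k = {0..2*k}"

definition plus_type :: "nat \<Rightarrow> bool" where
  "plus_type z = even z"

definition minus_type :: "nat \<Rightarrow> bool" where
  "minus_type z = odd z"

definition OmegaB' :: "nat \<Rightarrow> (int \<Rightarrow> int) \<Rightarrow> nat \<Rightarrow> nat" where
  "OmegaB' n \<pi> k = card {a :: nat \<Rightarrow> nat.
      a 0 = 0 \<and> (\<forall>i. n < i \<longrightarrow> a i = 0)
      \<and> (\<forall>i\<in>{1..n}. a i \<in> Zset k)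
      \<and> (\<forall>s<n. a s \<le> a (Suc s))
      \<and> (\<forall>s<n. \<pi> (int s) < \<pi> (int s + 1) \<longrightarrow> a s < a (Suc s) \<or> (a s = a (Suc s) \<and> plus_type (a s)))
      \<and> (\<forall>s<n. \<pi> (int s) > \<pi> (int s + 1) \<longrightarrow> a s < a (Suc s) \<or> (a s = a (Suc s) \<and> minus_type (a s)))}"

end

theory Submission
  imports Defs
begin

(* Conditioning on the last
   entry gives recursions in n for the generating functions Z_n (entries below 2k+1) and Zbar_n
   (entries below 2k, i.e. at most bar k): an ascent gives Z_(n+1) = (1+t)/(1-t) Z_n and
   Zbar_(n+1) = 2t/(1-t) Z_n, a descent gives Z_(n+1) = 2/(1-t) Zbar_n and
   Zbar_(n+1) = (1+t)/(1-t) Zbar_n. Hence Zbar_n = (1+t)/2 w_n Z_n, where the descent weight w_n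
   is 2t/(1+t) for n = 0, 4t/(1+t)^2 after an ascent and 1 after a descent, so a descent at
   position n multiplies Z_n by (1+t)/(1-t) w_n: the weight 2t/(1+t) occurs iff pi(1) < 0, and
   4t/(1+t)^2 once for every peak. *)

definition compatible_step :: "bool \<Rightarrow> nat \<Rightarrow> nat \<Rightarrow> bool" where
  "compatible_step desc x y \<longleftrightarrow> x < y \<or> (x = y \<and> (if desc then odd x else even x))"

definition compatible_seqs :: "(nat \<Rightarrow> bool) \<Rightarrow> nat \<Rightarrow> nat \<Rightarrow> (nat \<Rightarrow> nat) set" where
  "compatible_seqs d n m = {a. a 0 = 0 \<and> (\<forall>i>n. a i = 0) \<and> (\<forall>i\<le>n. a i < m)
      \<and> (\<forall>s<n. compatible_step (d s) (a s) (a (Suc s)))}"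

definition count_compatible :: "(nat \<Rightarrow> bool) \<Rightarrow> nat \<Rightarrow> nat \<Rightarrow> nat" where
  "count_compatible d n m = card (compatible_seqs d n m)"

definition pred_bound :: "bool \<Rightarrow> nat \<Rightarrow> nat" where
  "pred_bound desc y = (if (if desc then odd y else even y) then Suc y else y)"

lemma compatible_step_iff_less_pred_bound:
  "compatible_step desc x y \<longleftrightarrow> x < pred_bound desc y"
  unfolding compatible_step_def pred_bound_def by (auto simp: less_Suc_eq)

lemma finite_compatible_seqs: "finite (compatible_seqs d n m)"
proof (rule finite_subset)
  show "compatible_seqs d n m \<subseteq> {a. \<forall>i. (i \<in> {..n} \<longrightarrow> a i \<in> {..<m}) \<and> (i \<notin> {..n} \<longrightarrow> a i = 0)}"
    unfolding compatible_seqs_def by auto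
qed (rule finite_set_of_finite_funs; simp)

lemma compatible_seqs_mono:
  assumes "a \<in> compatible_seqs d n m" "i \<le> j" "j \<le> n"
  shows "a i \<le> a j"
proof (rule lift_Suc_mono_le_ivl[where N = "{..<n}" and f = a])
  show "a s \<le> a (Suc s)" if "s \<in> {..<n}" for s
    using assms(1) that unfolding compatible_seqs_def compatible_step_def by fastforce
qed (use assms(2,3) in auto)

lemma compatible_seqs_0: "compatible_seqs d 0 m = (if 0 < m then {\<lambda>_. 0} else {})"
  unfolding compatible_seqs_def by (auto simp: fun_eq_iff) (metis gr0I)

lemma compatible_seqs_Suc:
  "compatible_seqs d (Suc n) m =
     (\<Union>y<m. (\<lambda>a. a(Suc n := y)) ` compatible_seqs d n (pred_bound (d n) y))"
proof (intro equalityI subsetI)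
  fix a assume a: "a \<in> compatible_seqs d (Suc n) m"
  define y where "y = a (Suc n)"
  have "y < m" and last: "a n < pred_bound (d n) y"
    using a unfolding compatible_seqs_def y_def compatible_step_iff_less_pred_bound by auto
  have "a(Suc n := 0) \<in> compatible_seqs d n (pred_bound (d n) y)"
    using a last compatible_seqs_mono[OF a, of _ n] unfolding compatible_seqs_def
    by (auto simp: le_Suc_eq) (meson le_less_trans)
  moreover have "a = (a(Suc n := 0))(Suc n := y)"
    unfolding y_def by simp
  ultimately show "a \<in> (\<Union>y<m. (\<lambda>a. a(Suc n := y)) ` compatible_seqs d n (pred_bound (d n) y))"
    using \<open>y < m\<close> by blast
next
  fix a assume "a \<in> (\<Union>y<m. (\<lambda>a. a(Suc n := y)) ` compatible_seqs d n (pred_bound (d n) y))"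
  then obtain y b where "y < m" and b: "b \<in> compatible_seqs d n (pred_bound (d n) y)"
    and a: "a = b(Suc n := y)"
    by blast
  have "pred_bound (d n) y \<le> m"
    using \<open>y < m\<close> unfolding pred_bound_def by auto
  with b \<open>y < m\<close> show "a \<in> compatible_seqs d (Suc n) m"
    unfolding a compatible_seqs_def compatible_step_iff_less_pred_bound
    by (auto simp: le_Suc_eq less_Suc_eq)
qed

lemma count_compatible_0: "count_compatible d 0 m = (if 0 < m then 1 else 0)"
  unfolding count_compatible_def compatible_seqs_0 by simp

lemma count_compatible_bound_0: "count_compatible d n 0 = 0"
proof -
  have "compatible_seqs d n 0 = {}"
    unfolding compatible_seqs_def by auto
  then show ?thesis
    unfolding count_compatible_def by simp
qed

lemma count_compatible_Suc:
  "count_compatible d (Suc n) m = (\<Sum>y<m. count_compatible d n (pred_bound (d n) y))"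
proof -
  have inj: "inj_on (\<lambda>a. a(Suc n := y)) (compatible_seqs d n M)" for y M
    by (rule inj_onI) (simp add: compatible_seqs_def fun_eq_iff, metis lessI)
  have "count_compatible d (Suc n) m =
      (\<Sum>y<m. card ((\<lambda>a. a(Suc n := y)) ` compatible_seqs d n (pred_bound (d n) y)))"
    unfolding count_compatible_def compatible_seqs_Suc
    by (rule card_UN_disjoint) (auto simp: finite_compatible_seqs fun_eq_iff, metis)
  then show ?thesis
    unfolding count_compatible_def by (simp add: card_image[OF inj])
qed

lemma sum_lessThan_double:
  fixes g :: "nat \<Rightarrow> 'a::comm_monoid_add"
  shows "(\<Sum>y<2 * k. g y) = (\<Sum>j<k. g (2 * j)) + (\<Sum>j<k. g (2 * j + 1))"
  by (induction k) (simp_all add: algebra_simps)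

lemma count_compatible_ascent:
  assumes "\<not> d n"
  shows "count_compatible d (Suc n) (2 * k) = 2 * (\<Sum>j<k. count_compatible d n (2 * j + 1))"
    and "count_compatible d (Suc n) (2 * k + 1) =
           (\<Sum>j\<le>k. count_compatible d n (2 * j + 1)) + (\<Sum>j<k. count_compatible d n (2 * j + 1))"
  using assms unfolding count_compatible_Suc
  by (simp_all add: pred_bound_def sum_lessThan_double lessThan_Suc_atMost[symmetric])

lemma count_compatible_descent:
  assumes "d n"
  shows "count_compatible d (Suc n) (2 * k) =
           (\<Sum>j\<le>k. count_compatible d n (2 * j)) + (\<Sum>j<k. count_compatible d n (2 * j))"
    and "count_compatible d (Suc n) (2 * k + 1) = 2 * (\<Sum>j\<le>k. count_compatible d n (2 * j))"
  using assms sum.atMost_shift[of "\<lambda>j. count_compatible d n (2 * j)" k] unfolding count_compatible_Suc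
  by (simp_all add: pred_bound_def sum_lessThan_double lessThan_Suc_atMost[symmetric]
      count_compatible_bound_0)

lemma Abs_fps_sum_atMost:
  fixes f :: "nat \<Rightarrow> 'a::field"
  shows "Abs_fps (\<lambda>k. \<Sum>j\<le>k. f j) = inverse (1 - fps_X) * Abs_fps f"
proof -
  have "Abs_fps (\<lambda>k. \<Sum>j\<le>k. f j) = Abs_fps f * Abs_fps (\<lambda>_. 1)"
    by (rule fps_ext) (simp add: fps_mult_nth atLeast0AtMost)
  then show ?thesis
    by (simp add: fps_inverse_one_minus_fps_X mult.commute)
qed

lemma Abs_fps_sum_lessThan:
  fixes f :: "nat \<Rightarrow> 'a::field"
  shows "Abs_fps (\<lambda>k. \<Sum>j<k. f j) = fps_X * inverse (1 - fps_X) * Abs_fps f"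
proof -
  have "Abs_fps (\<lambda>k. \<Sum>j<k. f j) = fps_X * Abs_fps (\<lambda>k. \<Sum>j\<le>k. f j)"
    by (rule fps_ext) (auto simp: lessThan_Suc_atMost[symmetric] gr0_conv_Suc)
  then show ?thesis
    by (simp add: Abs_fps_sum_atMost mult.assoc)
qed

definition Z_gf :: "(nat \<Rightarrow> bool) \<Rightarrow> nat \<Rightarrow> real fps" where
  "Z_gf d n = Abs_fps (\<lambda>k. of_nat (count_compatible d n (2 * k + 1)))"

definition Zbar_gf :: "(nat \<Rightarrow> bool) \<Rightarrow> nat \<Rightarrow> real fps" where
  "Zbar_gf d n = Abs_fps (\<lambda>k. of_nat (count_compatible d n (2 * k)))"

lemma Z_gf_0: "Z_gf d 0 = inverse (1 - fps_X)"
  unfolding Z_gf_def by (simp add: count_compatible_0 fps_inverse_one_minus_fps_X)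

lemma Zbar_gf_0: "Zbar_gf d 0 = fps_X * inverse (1 - fps_X)"
proof -
  have "Zbar_gf d 0 = fps_X * Abs_fps (\<lambda>_. 1)"
    unfolding Zbar_gf_def by (rule fps_ext) (simp add: count_compatible_0)
  then show ?thesis
    by (simp add: fps_inverse_one_minus_fps_X)
qed

lemma Z_gf_ascent:
  assumes "\<not> d n"
  shows "Z_gf d (Suc n) = (1 + fps_X) * inverse (1 - fps_X) * Z_gf d n"
proof -
  define c where "c j = real (count_compatible d n (2 * j + 1))" for j
  have "Z_gf d (Suc n) = Abs_fps (\<lambda>k. \<Sum>j\<le>k. c j) + Abs_fps (\<lambda>k. \<Sum>j<k. c j)"
    unfolding Z_gf_def c_def by (rule fps_ext) (use count_compatible_ascent[of d n] assms in \<open>simp\<close>)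
  then show ?thesis
    unfolding Abs_fps_sum_atMost Abs_fps_sum_lessThan Z_gf_def c_def by (simp add: algebra_simps)
qed

lemma Zbar_gf_ascent:
  assumes "\<not> d n"
  shows "Zbar_gf d (Suc n) = 2 * fps_X * inverse (1 - fps_X) * Z_gf d n"
proof -
  define c where "c j = real (count_compatible d n (2 * j + 1))" for j
  have "Zbar_gf d (Suc n) = 2 * Abs_fps (\<lambda>k. \<Sum>j<k. c j)"
    unfolding Zbar_gf_def c_def
    by (rule fps_ext) (use count_compatible_ascent[of d n] assms in \<open>simp add: fps_numeral_fps_const\<close>)
  then show ?thesis
    unfolding Abs_fps_sum_lessThan Z_gf_def c_def by (simp add: algebra_simps)
qed

lemma Z_gf_descent:
  assumes "d n"
  shows "Z_gf d (Suc n) = 2 * inverse (1 - fps_X) * Zbar_gf d n"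
proof -
  define c where "c j = real (count_compatible d n (2 * j))" for j
  have "Z_gf d (Suc n) = 2 * Abs_fps (\<lambda>k. \<Sum>j\<le>k. c j)"
    unfolding Z_gf_def c_def
    by (rule fps_ext) (use count_compatible_descent[of d n] assms in \<open>simp add: fps_numeral_fps_const\<close>)
  then show ?thesis
    unfolding Abs_fps_sum_atMost Zbar_gf_def c_def by (simp add: algebra_simps)
qed

lemma Zbar_gf_descent:
  assumes "d n"
  shows "Zbar_gf d (Suc n) = (1 + fps_X) * inverse (1 - fps_X) * Zbar_gf d n"
proof -
  define c where "c j = real (count_compatible d n (2 * j))" for j
  have "Zbar_gf d (Suc n) = Abs_fps (\<lambda>k. \<Sum>j\<le>k. c j) + Abs_fps (\<lambda>k. \<Sum>j<k. c j)"
    unfolding Zbar_gf_def c_def by (rule fps_ext) (use count_compatible_descent[of d n] assms in \<open>simp\<close>)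
  then show ?thesis
    unfolding Abs_fps_sum_atMost Abs_fps_sum_lessThan Zbar_gf_def c_def by (simp add: algebra_simps)
qed

lemma one_plus_fps_X_inverse: "(1 + fps_X) * inverse (1 + fps_X :: 'a::field fps) = 1"
  by (rule inverse_mult_eq_1') simp

lemma fps_const_half_times_2: "fps_const (1/2) * 2 = (1 :: 'a::field_char_0 fps)"
  by (simp add: fps_numeral_fps_const)

lemmas real_fps_unit_identities =
  one_plus_fps_X_inverse[where 'a = real] fps_const_half_times_2[where 'a = real]

definition descent_weight :: "(nat \<Rightarrow> bool) \<Rightarrow> nat \<Rightarrow> real fps" where
  "descent_weight d n =
     (if n = 0 then 2 * fps_X * inverse (1 + fps_X)
      else if d (n - 1) then 1
      else 4 * fps_X * inverse ((1 + fps_X) ^ 2))"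

lemma Zbar_gf_eq_Z_gf:
  "Zbar_gf d n = fps_const (1/2) * (1 + fps_X) * descent_weight d n * Z_gf d n"
proof (cases n)
  case 0
  show ?thesis
    unfolding 0 descent_weight_def Z_gf_0 Zbar_gf_0
    using real_fps_unit_identities by simp algebra
next
  case (Suc m)
  show ?thesis
  proof (cases "d m")
    case True
    then show ?thesis
      unfolding Suc descent_weight_def
      using Zbar_gf_descent[of d m] Z_gf_descent[of d m] real_fps_unit_identities by simp
  next
    case False
    then show ?thesis
      unfolding Suc descent_weight_def fps_inverse_power
      using Zbar_gf_ascent[of d m] Z_gf_ascent[of d m] real_fps_unit_identities by simp algebra
  qed
qed

lemma Z_gf_Suc:
  "Z_gf d (Suc n) =
     (1 + fps_X) * inverse (1 - fps_X) * (if d n then descent_weight d n else 1) * Z_gf d n"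
proof (cases "d n")
  case True
  then show ?thesis
    using Z_gf_descent[of d n] Zbar_gf_eq_Z_gf[of d n] real_fps_unit_identities by simp algebra
qed (simp add: Z_gf_ascent)

definition initial_descent :: "(nat \<Rightarrow> bool) \<Rightarrow> nat \<Rightarrow> nat" where
  "initial_descent d n = (if 0 < n \<and> d 0 then 1 else 0)"

definition peak_count :: "(nat \<Rightarrow> bool) \<Rightarrow> nat \<Rightarrow> nat" where
  "peak_count d n = card {i. 0 < i \<and> i < n \<and> \<not> d (i - 1) \<and> d i}"

lemma initial_descent_Suc:
  "initial_descent d (Suc n) = initial_descent d n + (if n = 0 \<and> d 0 then 1 else 0)"
  unfolding initial_descent_def by auto

lemma peak_count_Suc:
  "peak_count d (Suc n) = peak_count d n + (if 0 < n \<and> \<not> d (n - 1) \<and> d n then 1 else 0)"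
proof -
  have "{i. 0 < i \<and> i < Suc n \<and> \<not> d (i - 1) \<and> d i} =
        {i. 0 < i \<and> i < n \<and> \<not> d (i - 1) \<and> d i} \<union>
        (if 0 < n \<and> \<not> d (n - 1) \<and> d n then {n} else {})"
    by (auto simp: less_Suc_eq)
  moreover have "finite {i. 0 < i \<and> i < n \<and> \<not> d (i - 1) \<and> d i}"
    by (rule finite_subset[of _ "{..<n}"]) auto
  ultimately show ?thesis
    unfolding peak_count_def by (simp add: card_Un_disjoint)
qed

definition closed_gf :: "(nat \<Rightarrow> bool) \<Rightarrow> nat \<Rightarrow> real fps" where
  "closed_gf d n = (1 + fps_X) ^ n * inverse ((1 - fps_X) ^ (n + 1))
     * (2 * fps_X * inverse (1 + fps_X)) ^ initial_descent d n
     * (4 * fps_X * inverse ((1 + fps_X) ^ 2)) ^ peak_count d n"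

lemma closed_gf_Suc:
  "closed_gf d (Suc n) =
     (1 + fps_X) * inverse (1 - fps_X) * (if d n then descent_weight d n else 1) * closed_gf d n"
  unfolding closed_gf_def descent_weight_def initial_descent_Suc peak_count_Suc fps_inverse_power
  by (auto simp: mult_ac)

lemma Z_gf_eq_closed_gf: "Z_gf d n = closed_gf d n"
proof (induction n)
  case 0
  then show ?case
    by (simp add: Z_gf_0 closed_gf_def initial_descent_def peak_count_def)
next
  case (Suc n)
  then show ?case
    by (simp only: Z_gf_Suc closed_gf_Suc)
qed

lemma closed_gf_alt:
  "(1 + fps_X) ^ n * inverse ((1 - fps_X) ^ (n + 1))
     * (2 * fps_X * inverse (1 + fps_X)) ^ s * (4 * fps_X * inverse ((1 + fps_X) ^ 2)) ^ p
   = fps_const (1/2) ^ s * (1 + fps_X :: real fps) ^ (n + s) * inverse ((1 - fps_X) ^ (n + 1))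
     * (4 * fps_X * inverse ((1 + fps_X) ^ 2)) ^ (p + s)"
proof -
  have "2 * fps_X * inverse (1 + fps_X) =
        fps_const (1/2) * (1 + fps_X) * (4 * fps_X * inverse ((1 + fps_X :: real fps) ^ 2))"
    unfolding fps_inverse_power using real_fps_unit_identities by algebra
  then show ?thesis
    by (simp add: power_mult_distrib power_add mult_ac)
qed

definition descent :: "(int \<Rightarrow> int) \<Rightarrow> nat \<Rightarrow> bool" where
  "descent \<pi> s \<longleftrightarrow> \<pi> (int s + 1) < \<pi> (int s)"

lemma signed_perm_0:
  assumes "\<pi> \<in> signed_perms n"
  shows "\<pi> 0 = 0"
proof -
  have "\<pi> (- 0) = - \<pi> 0"
    using assms unfolding signed_perms_def by blast
  then show ?thesis
    by simp
qed

lemma signed_perm_inj_on: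
  assumes "\<pi> \<in> signed_perms n"
  shows "inj_on \<pi> {-int n..int n}"
  using assms unfolding signed_perms_def bij_betw_def by blast

lemma signed_perm_adjacent_neq:
  assumes "\<pi> \<in> signed_perms n" "s < n"
  shows "\<pi> (int s) \<noteq> \<pi> (int s + 1)"
  using inj_onD[OF signed_perm_inj_on[OF assms(1)], of "int s" "int s + 1"] assms(2) by auto

lemma OmegaB'_eq_count_compatible:
  assumes "\<pi> \<in> signed_perms n"
  shows "OmegaB' n \<pi> k = count_compatible (descent \<pi>) n (2 * k + 1)"
proof -
  have step: "(a s \<le> a (Suc s)
        \<and> (\<pi> (int s) < \<pi> (int s + 1) \<longrightarrow> a s < a (Suc s) \<or> (a s = a (Suc s) \<and> plus_type (a s)))
        \<and> (\<pi> (int s) > \<pi> (int s + 1) \<longrightarrow> a s < a (Suc s) \<or> (a s = a (Suc s) \<and> minus_type (a s))))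
      \<longleftrightarrow> compatible_step (descent \<pi> s) (a s) (a (Suc s))" if "s < n" for a s
    using signed_perm_adjacent_neq[OF assms that]
    unfolding compatible_step_def descent_def plus_type_def minus_type_def
    by (cases "\<pi> (int s) < \<pi> (int s + 1)") auto
  have bound: "(\<forall>i\<in>{1..n}. a i \<in> Zset k) \<longleftrightarrow> (\<forall>i\<le>n. a i < 2 * k + 1)"
    if "a 0 = 0" for a :: "nat \<Rightarrow> nat"
    using that unfolding Zset_def
    by (auto simp: less_Suc_eq_le) (metis One_nat_def Suc_leI atLeastAtMost_iff gr0I le0)
  show ?thesis
    unfolding OmegaB'_def count_compatible_def compatible_seqs_def
  proof (intro arg_cong[where f = card] Collect_cong)
    fix a :: "nat \<Rightarrow> nat"
    show "(a 0 = 0 \<and> (\<forall>i>n. a i = 0) \<and> (\<forall>i\<in>{1..n}. a i \<in> Zset k) \<and> (\<forall>s<n. a s \<le> a (Suc s))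
        \<and> (\<forall>s<n. \<pi> (int s) < \<pi> (int s + 1) \<longrightarrow> a s < a (Suc s) \<or> a s = a (Suc s) \<and> plus_type (a s))
        \<and> (\<forall>s<n. \<pi> (int s + 1) < \<pi> (int s) \<longrightarrow> a s < a (Suc s) \<or> a s = a (Suc s) \<and> minus_type (a s)))
      \<longleftrightarrow> (a 0 = 0 \<and> (\<forall>i>n. a i = 0) \<and> (\<forall>i\<le>n. a i < 2 * k + 1)
        \<and> (\<forall>s<n. compatible_step (descent \<pi> s) (a s) (a (Suc s))))"
      using step[of _ a] bound[of a] by blast
  qed
qed

lemma varsigma_eq_initial_descent:
  assumes "\<pi> \<in> signed_perms n"
  shows "varsigma \<pi> = initial_descent (descent \<pi>) n"
proof (cases "n = 0")
  case True
  then have "\<pi> 1 = 1"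
    using assms unfolding signed_perms_def by simp
  then show ?thesis
    using True unfolding varsigma_def initial_descent_def by simp
next
  case False
  then show ?thesis
    using signed_perm_0[OF assms] signed_perm_adjacent_neq[OF assms, of 0]
    unfolding varsigma_def initial_descent_def descent_def by auto
qed

lemma peB_eq_peak_count:
  assumes "\<pi> \<in> signed_perms n"
  shows "peB n \<pi> = peak_count (descent \<pi>) n"
proof -
  have "{i \<in> {1..int n - 1}. \<pi> (i - 1) < \<pi> i \<and> \<pi> i > \<pi> (i + 1)}
        = int ` {i. 0 < i \<and> i < n \<and> \<not> descent \<pi> (i - 1) \<and> descent \<pi> i}"
  proof (intro equalityI subsetI)
    fix x assume x: "x \<in> {i \<in> {1..int n - 1}. \<pi> (i - 1) < \<pi> i \<and> \<pi> i > \<pi> (i + 1)}"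
    then have "x = int (nat x)" "int (nat x - 1) = x - 1" by auto
    with x show "x \<in> int ` {i. 0 < i \<and> i < n \<and> \<not> descent \<pi> (i - 1) \<and> descent \<pi> i}"
      unfolding descent_def by (auto intro!: image_eqI[where x = "nat x"])
  next
    fix x assume "x \<in> int ` {i. 0 < i \<and> i < n \<and> \<not> descent \<pi> (i - 1) \<and> descent \<pi> i}"
    then obtain i where i: "x = int i" "0 < i" "i < n" "\<not> descent \<pi> (i - 1)" "descent \<pi> i"
      by blast
    then have "int (i - 1) = x - 1" by auto
    with i signed_perm_adjacent_neq[OF assms, of "i - 1"]
    show "x \<in> {i \<in> {1..int n - 1}. \<pi> (i - 1) < \<pi> i \<and> \<pi> i > \<pi> (i + 1)}"
      unfolding descent_def by auto
  qed
  then show ?thesis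
    unfolding peB_def peak_count_def by (simp add: card_image)
qed

theorem theorem4p12:
  fixes n :: nat and \<pi> :: "int \<Rightarrow> int"
  assumes "\<pi> \<in> signed_perms n"
  shows "(Abs_fps (\<lambda>k. of_nat (OmegaB' n \<pi> k)) :: real fps) =
           (1 + fps_X) ^ n * inverse ((1 - fps_X) ^ (n + 1))
           * (fps_const 2 * fps_X * inverse (1 + fps_X)) ^ varsigma \<pi>
           * (fps_const 4 * fps_X * inverse ((1 + fps_X) ^ 2)) ^ peB n \<pi>
       \<and> (Abs_fps (\<lambda>k. of_nat (OmegaB' n \<pi> k)) :: real fps) =
           fps_const (1/2) ^ varsigma \<pi> * (1 + fps_X) ^ (n + varsigma \<pi>)
           * inverse ((1 - fps_X) ^ (n + 1))
           * (fps_const 4 * fps_X * inverse ((1 + fps_X) ^ 2)) ^ (peB n \<pi> + varsigma \<pi>)"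
proof -
  have "(Abs_fps (\<lambda>k. of_nat (OmegaB' n \<pi> k)) :: real fps) = Z_gf (descent \<pi>) n"
    unfolding Z_gf_def OmegaB'_eq_count_compatible[OF assms] ..
  also have "\<dots> = closed_gf (descent \<pi>) n"
    by (rule Z_gf_eq_closed_gf)
  finally show ?thesis
    unfolding fps_numeral_fps_const[symmetric] closed_gf_def closed_gf_alt
      varsigma_eq_initial_descent[OF assms] peB_eq_peak_count[OF assms]
    by simp
qed

end
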